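(* Let $n,m\ge 1$, $X=\{x_1,\dots,x_m\}$, and for each $1\le i\le n$ let $A_i,B_i$ be nonempty subsets of $X$ with $A_i\cap B_i=\emptyset$. Let $Y=\{y_1,\dots,y_n\}$ be a set disjoint from $X$, and let $\Sigma'$ be the set of implications on $X\cup Y$ consisting of $(A_i\cup (Y\setminus\{y_i\}))\rightarrow B_i$ for $1\le i\le n$, together with $Y\rightarrow X$. Then the closure system on $X\cup Y$ associated with $\Sigma'$ is a convex geometry.
   Context: A closure operator on a set $X$ is a map $\phi:\mathcal P(X)\to\mathcal P(X)$ that is extensive, monotone and idempotent; its image consists of the closed sets. An implication on a set $Z$ is a pair $A\rightarrow B$ with $A,B\subseteq Z$, $B\ne\emptyset$. For a set $\Sigma$ of implications on $Z$, the associated closure system has as closed sets exactly the $S\subseteq Z$ such that $A\subseteq S$ implies $B\subseteq S$ for every $(A\rightarrow B)\in\Sigma$. A convex geometry is a finite closure system $\langle Z,\phi\rangle$ with $\phi(\emptyset)=\emptyset$ satisfying the anti-exchange property: for every closed set $A\subsetneq Z$ and all distinct $x,y\in Z\setminus A$, $y\notin\phi(A\cup\{x\})$ or $x\notin\phi(A\cup\{y\})$ (equivalently, for every closed $A\subsetneq Z$ there is $x\in Z\setminus A$ with $A\cup\{x\}$ closed). *)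

theory Defs
  imports Main
begin

definition is_implication_on :: "'a set \<Rightarrow> 'a set \<times> 'a set \<Rightarrow> bool" where
  "is_implication_on Z imp \<longleftrightarrow> fst imp \<subseteq> Z \<and> snd imp \<subseteq> Z \<and> snd imp \<noteq> {}"

definition imp_closed :: "'a set \<Rightarrow> ('a set \<times> 'a set) set \<Rightarrow> 'a set \<Rightarrow> bool" where
  "imp_closed Z \<Sigma> S \<longleftrightarrow> S \<subseteq> Z \<and> (\<forall>(A, B) \<in> \<Sigma>. A \<subseteq> S \<longrightarrow> B \<subseteq> S)"

definition imp_closure :: "'a set \<Rightarrow> ('a set \<times> 'a set) set \<Rightarrow> 'a set \<Rightarrow> 'a set" where
  "imp_closure Z \<Sigma> S = \<Inter> {C. imp_closed Z \<Sigma> C \<and> S \<subseteq> C}"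

definition closure_operator :: "'a set \<Rightarrow> ('a set \<Rightarrow> 'a set) \<Rightarrow> bool" where
  "closure_operator Z \<phi> \<longleftrightarrow>
     (\<forall>S. S \<subseteq> Z \<longrightarrow> S \<subseteq> \<phi> S \<and> \<phi> S \<subseteq> Z) \<and>
     (\<forall>S T. S \<subseteq> T \<and> T \<subseteq> Z \<longrightarrow> \<phi> S \<subseteq> \<phi> T) \<and>
     (\<forall>S. S \<subseteq> Z \<longrightarrow> \<phi> (\<phi> S) = \<phi> S)"

definition convex_geometry :: "'a set \<Rightarrow> ('a set \<Rightarrow> 'a set) \<Rightarrow> bool" where
  "convex_geometry Z \<phi> \<longleftrightarrow>
     finite Z \<and> closure_operator Z \<phi> \<and> \<phi> {} = {} \<and>
     (\<forall>A x y. A \<subseteq> Z \<and> \<phi> A = A \<and> A \<noteq> Z \<and> x \<in> Z - A \<and> y \<in> Z - A \<and> x \<noteq> y \<longrightarrow>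
        y \<notin> \<phi> (A \<union> {x}) \<or> x \<notin> \<phi> (A \<union> {y}))"

end

theory Submission
  imports Defs
begin

text \<open>A set T missing at least two elements of Y is closed: no implication fires. If T misses
  exactly y j, only the j-th implication can fire, and it adds B j without touching Y; since
  A j and B j are disjoint, this addition cannot make any other implication fire. So the closure
  of T is T itself, T together with B j, or everything when Y is contained in T. Now if p and q
  each lie in the closure of P plus the other, both must enter through the same B j, with
  A j contained in P; but then closedness of P already forces B j, hence p, into P.\<close>

lemma imp_closure_least: "imp_closed Z \<Sigma> C \<Longrightarrow> T \<subseteq> C \<Longrightarrow> imp_closure Z \<Sigma> T \<subseteq> C"
  unfolding imp_closure_def by blast

lemma imp_closure_ext: "T \<subseteq> imp_closure Z \<Sigma> T"
  unfolding imp_closure_def by blast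

lemma imp_closure_mono: "T \<subseteq> U \<Longrightarrow> imp_closure Z \<Sigma> T \<subseteq> imp_closure Z \<Sigma> U"
  unfolding imp_closure_def by blast

lemma imp_closure_eqI:
  assumes "T \<subseteq> C" "imp_closed Z \<Sigma> C" "\<And>D. imp_closed Z \<Sigma> D \<Longrightarrow> T \<subseteq> D \<Longrightarrow> C \<subseteq> D"
  shows "imp_closure Z \<Sigma> T = C"
  using assms unfolding imp_closure_def by blast

lemma imp_closure_closed_eq: "imp_closed Z \<Sigma> T \<Longrightarrow> imp_closure Z \<Sigma> T = T"
  by (rule imp_closure_eqI) auto

lemma imp_closed_Inter:
  assumes "\<And>C. C \<in> F \<Longrightarrow> imp_closed Z \<Sigma> C" "F \<noteq> {}"
  shows "imp_closed Z \<Sigma> (\<Inter>F)"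
proof -
  have "B \<subseteq> C" if "(P, B) \<in> \<Sigma>" "P \<subseteq> \<Inter>F" "C \<in> F" for P B C
    using assms(1)[OF that(3)] that unfolding imp_closed_def by blast
  then show ?thesis
    using assms unfolding imp_closed_def by blast
qed

lemma imp_closed_imp_closure:
  assumes "imp_closed Z \<Sigma> Z" "T \<subseteq> Z"
  shows "imp_closed Z \<Sigma> (imp_closure Z \<Sigma> T)"
  unfolding imp_closure_def by (rule imp_closed_Inter) (use assms in auto)

lemma closure_operator_imp_closure:
  assumes "imp_closed Z \<Sigma> Z"
  shows "closure_operator Z (imp_closure Z \<Sigma>)"
  unfolding closure_operator_def
proof (intro conjI allI impI)
  fix T assume T: "T \<subseteq> Z"
  show "T \<subseteq> imp_closure Z \<Sigma> T"
    by (rule imp_closure_ext)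
  show "imp_closure Z \<Sigma> T \<subseteq> Z"
    by (rule imp_closure_least[OF assms T])
  show "imp_closure Z \<Sigma> (imp_closure Z \<Sigma> T) = imp_closure Z \<Sigma> T"
    by (rule imp_closure_closed_eq[OF imp_closed_imp_closure[OF assms T]])
next
  fix T U :: "'a set" assume "T \<subseteq> U \<and> U \<subseteq> Z"
  then show "imp_closure Z \<Sigma> T \<subseteq> imp_closure Z \<Sigma> U"
    by (simp add: imp_closure_mono)
qed

locale extended_implications =
  fixes X Y :: "'a set" and I :: "'i set" and y :: "'i \<Rightarrow> 'a" and A B :: "'i \<Rightarrow> 'a set"
  assumes bij_y: "bij_betw y I Y"
    and Y_disjoint_X: "Y \<inter> X = {}"
    and B_subset_X: "i \<in> I \<Longrightarrow> B i \<subseteq> X"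
    and A_disjoint_B: "i \<in> I \<Longrightarrow> A i \<inter> B i = {}"
begin

abbreviation Z :: "'a set" where "Z \<equiv> X \<union> Y"

definition implications :: "('a set \<times> 'a set) set" where
  "implications = {(A i \<union> (Y - {y i}), B i) | i. i \<in> I} \<union> {(Y, X)}"

lemma y_in_Y: "i \<in> I \<Longrightarrow> y i \<in> Y"
  using bij_y by (rule bij_betw_apply)

lemma y_eq_iff: "i \<in> I \<Longrightarrow> j \<in> I \<Longrightarrow> y i = y j \<longleftrightarrow> i = j"
  using bij_betw_imp_inj_on[OF bij_y] by (rule inj_on_eq_iff)

lemma imp_closed_iff:
  "imp_closed Z implications T \<longleftrightarrow>
     T \<subseteq> Z \<and> (\<forall>i\<in>I. A i \<union> (Y - {y i}) \<subseteq> T \<longrightarrow> B i \<subseteq> T) \<and> (Y \<subseteq> T \<longrightarrow> X \<subseteq> T)"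
  unfolding imp_closed_def implications_def by blast

lemma imp_closed_ground: "imp_closed Z implications Z"
  using B_subset_X by (auto simp: imp_closed_iff)

definition closure_formula :: "'a set \<Rightarrow> 'a set" where
  "closure_formula T =
     (if Y \<subseteq> T then Z else T \<union> \<Union>{B i | i. i \<in> I \<and> Y - T = {y i} \<and> A i \<subseteq> T})"

lemma imp_closed_closure_formula:
  assumes "T \<subseteq> Z"
  shows "imp_closed Z implications (closure_formula T)"
proof (cases "Y \<subseteq> T")
  case True
  then show ?thesis by (simp add: closure_formula_def imp_closed_ground)
next
  case False
  define U where "U = \<Union>{B i | i. i \<in> I \<and> Y - T = {y i} \<and> A i \<subseteq> T}"
  have formula: "closure_formula T = T \<union> U"
    using False by (simp add: closure_formula_def U_def)
  have U_X: "U \<subseteq> X"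
    using B_subset_X by (auto simp: U_def)
  have "B i \<subseteq> T \<union> U" if i: "i \<in> I" and fires: "A i \<union> (Y - {y i}) \<subseteq> T \<union> U" for i
  proof -
    have "Y - {y i} \<subseteq> T"
      using fires U_X Y_disjoint_X by blast
    with False y_in_Y[OF i] have missing: "Y - T = {y i}"
      by blast
    have "j = i" if "j \<in> I" "Y - T = {y j}" for j
      using y_eq_iff[OF that(1) i] that(2) missing by simp
    then have "U \<subseteq> B i"
      unfolding U_def by blast
    with fires have "A i \<subseteq> T \<union> B i"
      by blast
    then have "A i \<subseteq> T"
      using A_disjoint_B[OF i] by blast
    then have "B i \<subseteq> U"
      unfolding U_def using i missing by blast
    then show ?thesis
      by blast
  qed
  moreover have "\<not> Y \<subseteq> T \<union> U"
    using False U_X Y_disjoint_X by blast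
  moreover have "T \<union> U \<subseteq> Z"
    using assms U_X by blast
  ultimately show ?thesis
    unfolding formula imp_closed_iff by blast
qed

lemma imp_closure_eq_closure_formula:
  assumes "T \<subseteq> Z"
  shows "imp_closure Z implications T = closure_formula T"
proof (rule imp_closure_eqI)
  show "T \<subseteq> closure_formula T"
    using assms by (auto simp: closure_formula_def)
  show "imp_closed Z implications (closure_formula T)"
    using assms by (rule imp_closed_closure_formula)
  show "closure_formula T \<subseteq> D" if D: "imp_closed Z implications D" "T \<subseteq> D" for D
  proof -
    have "B i \<subseteq> D" if "i \<in> I" "Y - T = {y i}" "A i \<subseteq> T" for i
    proof -
      have "A i \<union> (Y - {y i}) \<subseteq> D"
        using that D(2) by blast
      then show ?thesis
        using D(1) that(1) by (simp add: imp_closed_iff)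
    qed
    moreover have "Y \<subseteq> T \<Longrightarrow> Z \<subseteq> D"
      using D by (simp add: imp_closed_iff)
    ultimately show ?thesis
      using D(2) by (auto simp: closure_formula_def)
  qed
qed

lemma gained_point:
  assumes "q \<in> closure_formula (P \<union> {p})" "q \<notin> P" "q \<noteq> p"
  shows "Y \<subseteq> P \<union> {p} \<or> (\<exists>i\<in>I. Y - (P \<union> {p}) = {y i} \<and> A i \<subseteq> P \<union> {p} \<and> q \<in> B i)"
  using assms by (auto simp: closure_formula_def split: if_splits)

lemma anti_exchange:
  assumes P: "imp_closed Z implications P" "\<not> Y \<subseteq> P"
    and pq: "p \<notin> P" "q \<notin> P" "p \<noteq> q"
    and q_gained: "q \<in> closure_formula (P \<union> {p})"
    and p_gained: "p \<in> closure_formula (P \<union> {q})"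
  shows False
proof -
  have no_Y_in_B: "z \<notin> B i" if "i \<in> I" "z \<in> Y" for z i
    using that B_subset_X Y_disjoint_X by blast
  consider "Y \<subseteq> P \<union> {p}" | "Y \<subseteq> P \<union> {q}"
    | i k where "i \<in> I" "Y - (P \<union> {p}) = {y i}" "A i \<subseteq> P \<union> {p}" "q \<in> B i"
        "k \<in> I" "Y - (P \<union> {q}) = {y k}" "p \<in> B k"
    using gained_point[OF q_gained pq(2) pq(3)[symmetric]] gained_point[OF p_gained pq(1,3)]
    by blast
  then show False
  proof cases
    case 1
    then show False
      using gained_point[OF p_gained pq(1,3)] no_Y_in_B P(2) pq by blast
  next
    case 2
    then show False
      using gained_point[OF q_gained pq(2) pq(3)[symmetric]] no_Y_in_B P(2) pq by blast
  next
    case 3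
    then have "p \<notin> Y" "q \<notin> Y"
      using no_Y_in_B by blast+
    with 3 have "y i = y k"
      by blast
    with 3 have "i = k"
      by (simp add: y_eq_iff)
    with 3 have "A i \<subseteq> P"
      using A_disjoint_B by blast
    moreover have "Y - {y i} \<subseteq> P"
      using 3 \<open>p \<notin> Y\<close> by blast
    ultimately have "B i \<subseteq> P"
      using P(1) 3 by (auto simp: imp_closed_iff)
    with 3 \<open>i = k\<close> pq(1) show False
      by blast
  qed
qed

theorem convex_geometry_imp_closure:
  assumes "finite X" "finite I" "I \<noteq> {}" "\<And>i. i \<in> I \<Longrightarrow> A i \<noteq> {}"
  shows "convex_geometry Z (imp_closure Z implications)"
  unfolding convex_geometry_def
proof (intro conjI allI impI)
  show "finite Z"
    using assms(1,2) bij_betw_finite[OF bij_y] by simp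
  show "closure_operator Z (imp_closure Z implications)"
    by (rule closure_operator_imp_closure[OF imp_closed_ground])
  have "Y \<noteq> {}"
    using assms(3) y_in_Y by blast
  then show "imp_closure Z implications {} = {}"
    using assms(4) by (auto simp: imp_closure_eq_closure_formula closure_formula_def)
next
  fix P p q
  assume "P \<subseteq> Z \<and> imp_closure Z implications P = P \<and> P \<noteq> Z \<and>
    p \<in> Z - P \<and> q \<in> Z - P \<and> p \<noteq> q"
  then have P: "P \<subseteq> Z" "imp_closure Z implications P = P" "P \<noteq> Z"
    and pq: "p \<in> Z - P" "q \<in> Z - P" "p \<noteq> q"
    by auto
  have closed: "imp_closed Z implications P"
    using imp_closed_imp_closure[OF imp_closed_ground P(1)] P(2) by simp
  then have "\<not> Y \<subseteq> P"
    using P by (auto simp: imp_closed_iff)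
  then have "\<not> (q \<in> closure_formula (P \<union> {p}) \<and> p \<in> closure_formula (P \<union> {q}))"
    using anti_exchange[OF closed] pq by blast
  moreover have "P \<union> {p} \<subseteq> Z" "P \<union> {q} \<subseteq> Z"
    using P pq by auto
  ultimately show "q \<notin> imp_closure Z implications (P \<union> {p}) \<or>
      p \<notin> imp_closure Z implications (P \<union> {q})"
    by (simp add: imp_closure_eq_closure_formula)
qed

end

theorem claim1:
  fixes X :: "'a set" and x y :: "nat \<Rightarrow> 'a" and A B :: "nat \<Rightarrow> 'a set" and n m :: nat
  assumes "n \<ge> 1" and "m \<ge> 1"
    and "X = x ` {1..m}" and "inj_on x {1..m}"
    and "\<And>i. i \<in> {1..n} \<Longrightarrow> A i \<subseteq> X \<and> B i \<subseteq> X \<and> A i \<noteq> {} \<and> B i \<noteq> {} \<and> A i \<inter> B i = {}"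
    and "inj_on y {1..n}" and "y ` {1..n} \<inter> X = {}"
  shows "convex_geometry (X \<union> y ` {1..n})
           (imp_closure (X \<union> y ` {1..n})
              ({(A i \<union> (y ` {1..n} - {y i}), B i) | i. i \<in> {1..n}} \<union> {(y ` {1..n}, X)}))"
proof -
  interpret extended_implications X "y ` {1..n}" "{1..n}" y A B
  proof
    show "B i \<subseteq> X" "A i \<inter> B i = {}" if "i \<in> {1..n}" for i
      using assms(5)[OF that] by auto
  qed (use assms(6,7) inj_on_imp_bij_betw in auto)
  have "convex_geometry Z (imp_closure Z implications)"
  proof (rule convex_geometry_imp_closure)
    show "finite X"
      using assms(3) by simp
    show "{1..n} \<noteq> {}"
      using assms(1) by simp
  qed (use assms(5) in simp_all)
  then show ?thesis
    unfolding implications_def .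
qed

end
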